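(* Let $f(z)=\sum_{n=0}^\infty a_nz^n$ be an analytic function in the open unit disk $\mathbb{D}=\{z\in\mathbb{C}:|z|<1\}$ such that $a_{0}\in (0,1)$ and $\operatorname{Re} f(z)<1$ in $\mathbb{D}$. Then $$\sum_{n=0}^\infty |a_n|r^n+\left(\frac{1}{1+a_0}+\frac{r}{1-r}\right)\sum_{n=1}^{\infty}|a_n|^2r^{2n} \le 1$$ holds for all $r\leq r_{*}$, where $r_{*}\approx 0.24683$ is the unique root of the equation $3r^3-5r^2-3r+1=0$ in the interval $(0,1)$. Moreover, for any $a_{0}\in (0,1)$ there exists a uniquely defined $r_0=r_0(a_0)\in \left(r_{*},\frac{1}{3}\right)$ such that $$\sum_{n=0}^\infty |a_n|r^n+\left(\frac{1}{1+a_0}+\frac{r}{1-r}\right)\sum_{n=1}^{\infty}|a_n|^2r^{2n} \le 1$$ for $r\in [0,r_0]$. The radius $r_0=r_0(a_0)$ can be calculated as the solution of the equation $$\Phi(\lambda,r)= 4r^3\lambda^2- (7r^3+3r^2-3r+1)\lambda +6r^3-2r^2-6r+2 = 0,$$ where $\lambda = 1 - a_0$. The result is sharp.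
   Context: $\mathbb{D}$ denotes the open unit disk $\{z\in\mathbb{C}:|z|<1\}$. *)

theory Defs
  imports "HOL-Analysis.Analysis"
begin

definition taylor_coeff :: "(complex \<Rightarrow> complex) \<Rightarrow> nat \<Rightarrow> complex" where
  "taylor_coeff f n = (deriv ^^ n) f 0 / of_nat (fact n)"

definition admissible :: "real \<Rightarrow> (complex \<Rightarrow> complex) \<Rightarrow> bool" where
  "admissible a0 f \<longleftrightarrow> f holomorphic_on ball 0 1 \<and> f 0 = complex_of_real a0 \<and>
     (\<forall>z\<in>ball 0 1. Re (f z) < 1)"

definition bohr_sum :: "(complex \<Rightarrow> complex) \<Rightarrow> real \<Rightarrow> real \<Rightarrow> real" where
  "bohr_sum f a0 r =
     (\<Sum>n. norm (taylor_coeff f n) * r ^ n) +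
     (1 / (1 + a0) + r / (1 - r)) * (\<Sum>n. (norm (taylor_coeff f (Suc n)))\<^sup>2 * r ^ (2 * Suc n))"

definition rstar_poly :: "real \<Rightarrow> real" where
  "rstar_poly r = 3 * r ^ 3 - 5 * r ^ 2 - 3 * r + 1"

definition rstar :: real where
  "rstar = (THE r. 0 < r \<and> r < 1 \<and> rstar_poly r = 0)"

definition Phi :: "real \<Rightarrow> real \<Rightarrow> real" where
  "Phi lam r = 4 * r ^ 3 * lam ^ 2 - (7 * r ^ 3 + 3 * r ^ 2 - 3 * r + 1) * lam
              + 6 * r ^ 3 - 2 * r ^ 2 - 6 * r + 2"

end

theory Submission
  imports Defs "HOL-Complex_Analysis.Complex_Analysis"
begin

text \<open>
  Write 1 - f = p, so that Re p > 0 and p(0) = 1 - a0. On the circle |z| = \<rho>, Cauchy's formula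
  makes a_n \<rho>^n (n \<ge> 1) the n-th Fourier coefficient of 2 Re p, whose mean is 2 Re p(0); this gives
  Caratheodory's bound |a_n| \<le> 2 (1 - a0). The function a0 - 2 (1 - a0) z / (1 - z) attains it
  for every n, so for each r the left-hand side is largest for this function, where it equals an explicit
  rational function M(a0, r), strictly increasing in r, with
  1 - M = (1 - a0) \<Phi>(1 - a0, r) / ((1 + a0) (1 - r) (1 - r^2)).
  Hence the inequality holds exactly for r up to the root r0 of \<Phi>(1 - a0, -). Finally
  \<Phi>(\<lambda>, 1/3) < 0 < \<Phi>(\<lambda>, r_*), the latter because \<Phi>(1, -) is the cubic defining r_* and
  \<Phi>(\<lambda>, r) exceeds it for \<lambda> < 1, which places r0 in (r_*, 1/3).
\<close>

lemma has_integral_circlepath_0: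
  fixes \<rho> :: real
  assumes "(f has_contour_integral I) (circlepath 0 \<rho>)"
  shows "((\<lambda>t. f (\<rho> * cis (2*pi*t)) * (\<rho> * cis (2*pi*t))) has_integral I / (2*pi*\<i>)) {0..1}"
proof -
  have path: "circlepath 0 \<rho> t = \<rho> * cis (2*pi*t)" for t
    by (simp add: circlepath cis_conv_exp mult_ac)
  have deriv: "vector_derivative (circlepath 0 \<rho>) (at t within {0..1}) = 2*pi*\<i> * (\<rho> * cis (2*pi*t))"
    if "t \<in> {0..1}" for t
    using that by (simp add: vector_derivative_circlepath01 cis_conv_exp mult_ac)
  have "((\<lambda>t. f (circlepath 0 \<rho> t) * vector_derivative (circlepath 0 \<rho>) (at t within {0..1}))
          has_integral I) {0..1}"
    using assms by (simp add: has_contour_integral_def)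
  then have "((\<lambda>t. 2*pi*\<i> * (f (\<rho> * cis (2*pi*t)) * (\<rho> * cis (2*pi*t)))) has_integral I) {0..1}"
    by (rule has_integral_eq[rotated]) (simp add: path deriv mult_ac)
  then show ?thesis
    by (simp add: has_integral_mult_right_iff)
qed

lemma has_integral_circle_taylor_coeff:
  fixes g :: "complex \<Rightarrow> complex" and \<rho> :: real
  assumes holo: "g holomorphic_on ball 0 1" and \<rho>: "0 < \<rho>" "\<rho> < 1"
  shows "((\<lambda>t. g (\<rho> * cis (2*pi*t)) * cis (-(2*pi*t)) ^ k) has_integral
           (deriv ^^ k) g 0 / fact k * \<rho> ^ k) {0..1}"
proof -
  have "g holomorphic_on cball 0 \<rho>"
    using \<rho> by (intro holomorphic_on_subset[OF holo]) auto
  have "((\<lambda>u. g u / (u - 0) ^ Suc k) has_contour_integral 2*pi*\<i> / fact k * (deriv ^^ k) g 0)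
          (circlepath 0 \<rho>)"
    using \<rho> \<open>g holomorphic_on cball 0 \<rho>\<close>
    by (intro Cauchy_has_contour_integral_higher_derivative_circlepath)
       (auto intro: holomorphic_on_imp_continuous_on holomorphic_on_subset[OF _ ball_subset_cball])
  from has_integral_circlepath_0[OF this]
  have "((\<lambda>t. \<rho> ^ k * (g (\<rho> * cis (2*pi*t)) / (\<rho> * cis (2*pi*t)) ^ Suc k * (\<rho> * cis (2*pi*t))))
          has_integral \<rho> ^ k * (2*pi*\<i> / fact k * (deriv ^^ k) g 0 / (2*pi*\<i>))) {0..1}"
    by (intro has_integral_mult_right) simp
  moreover have "\<rho> ^ k * (g (\<rho> * cis (2*pi*t)) / (\<rho> * cis (2*pi*t)) ^ Suc k * (\<rho> * cis (2*pi*t)))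
      = g (\<rho> * cis (2*pi*t)) * cis (-(2*pi*t)) ^ k" for t
    using \<rho> by (simp add: field_simps cis_inverse[symmetric])
  ultimately show ?thesis by (simp add: mult.commute)
qed

lemma has_integral_circle_pos_power:
  fixes g :: "complex \<Rightarrow> complex" and \<rho> :: real
  assumes holo: "g holomorphic_on ball 0 1" and \<rho>: "0 < \<rho>" "\<rho> < 1"
  shows "((\<lambda>t. g (\<rho> * cis (2*pi*t)) * cis (2*pi*t) ^ Suc k) has_integral 0) {0..1}"
proof -
  have "((\<lambda>u. g u * u ^ k) has_contour_integral 0) (circlepath 0 \<rho>)"
    using \<rho>
    by (intro Cauchy_theorem_convex_simple[OF _ convex_ball, of _ 0 1])
       (auto intro!: holomorphic_intros holo simp: path_image_circlepath)
  from has_integral_circlepath_0[OF this]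
  have "((\<lambda>t. 1 / \<rho> ^ Suc k * (g (\<rho> * cis (2*pi*t)) * (\<rho> * cis (2*pi*t)) ^ k * (\<rho> * cis (2*pi*t))))
          has_integral 1 / \<rho> ^ Suc k * (0 / (2*pi*\<i>))) {0..1}"
    by (rule has_integral_mult_right)
  moreover have "1 / \<rho> ^ Suc k * (g (\<rho> * cis (2*pi*t)) * (\<rho> * cis (2*pi*t)) ^ k * (\<rho> * cis (2*pi*t)))
      = g (\<rho> * cis (2*pi*t)) * cis (2*pi*t) ^ Suc k" for t
    using \<rho> by (simp add: field_simps)
  ultimately show ?thesis by simp
qed

lemma Caratheodory_coeff_bound_circle:
  fixes g :: "complex \<Rightarrow> complex" and \<rho> :: real
  assumes holo: "g holomorphic_on ball 0 1" and pos: "\<And>z. z \<in> ball 0 1 \<Longrightarrow> 0 < Re (g z)"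
    and n: "n \<ge> 1" and \<rho>: "0 < \<rho>" "\<rho> < 1"
  shows "norm ((deriv ^^ n) g 0 / fact n) * \<rho> ^ n \<le> 2 * Re (g 0)"
proof -
  define h where "h t = g (\<rho> * cis (2*pi*t))" for t
  obtain m where m: "n = Suc m" using n by (cases n) auto
  have coeff: "((\<lambda>t. h t * cis (-(2*pi*t)) ^ n) has_integral (deriv ^^ n) g 0 / fact n * \<rho> ^ n) {0..1}"
    unfolding h_def by (rule has_integral_circle_taylor_coeff[OF holo \<rho>])
  have mean: "(h has_integral g 0) {0..1}"
    using has_integral_circle_taylor_coeff[OF holo \<rho>, of 0] unfolding h_def by simp
  have "((\<lambda>t. h t * cis (2*pi*t) ^ n) has_integral 0) {0..1}"
    unfolding h_def m by (rule has_integral_circle_pos_power[OF holo \<rho>])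
  then have "((cnj \<circ> (\<lambda>t. h t * cis (2*pi*t) ^ n)) has_integral cnj 0) {0..1}"
    using has_integral_cnj by blast
  then have conj: "((\<lambda>t. cnj (h t) * cis (-(2*pi*t)) ^ n) has_integral 0) {0..1}"
    by (simp add: o_def cis_cnj)
  \<comment> \<open>Adding the conjugate of a vanishing integral turns h into 2 Re h, which is positive.\<close>
  from has_integral_add[OF coeff conj]
  have re_coeff: "((\<lambda>t. of_real (2 * Re (h t)) * cis (-(2*pi*t)) ^ n) has_integral
           (deriv ^^ n) g 0 / fact n * \<rho> ^ n) {0..1}"
    by (simp add: distrib_right[symmetric] complex_add_cnj)
  have "((Re \<circ> h) has_integral Re (g 0)) {0..1}"
    using has_integral_linear[OF mean bounded_linear_Re] by simp
  then have re_mean: "((\<lambda>t. 2 * Re (h t)) has_integral 2 * Re (g 0)) {0..1}"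
    using has_integral_mult_right[of "Re \<circ> h" "Re (g 0)" "{0..1}" 2] by (simp add: o_def)
  have h_pos: "Re (h t) > 0" for t
    unfolding h_def using \<rho> by (intro pos) (simp add: norm_mult)
  have bound: "norm (integral {0..1} (\<lambda>t. of_real (2 * Re (h t)) * cis (-(2*pi*t)) ^ n))
        \<le> integral {0..1} (\<lambda>t. 2 * Re (h t))"
  proof (rule integral_norm_bound_integral)
    show "norm (of_real (2 * Re (h t)) * cis (-(2*pi*t)) ^ n) \<le> 2 * Re (h t)" for t
      using h_pos[of t] by (simp add: norm_mult norm_power)
  qed (use re_coeff re_mean in blast)+
  have "norm ((deriv ^^ n) g 0 / fact n) * \<rho> ^ n = norm ((deriv ^^ n) g 0 / fact n * \<rho> ^ n)"
    using \<rho> by (metis norm_mult norm_of_real abs_of_pos zero_less_power)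
  also have "\<dots> \<le> 2 * Re (g 0)"
    using bound integral_unique[OF re_coeff] integral_unique[OF re_mean] by simp
  finally show ?thesis .
qed

lemma Caratheodory_coeff_bound:
  fixes g :: "complex \<Rightarrow> complex"
  assumes "g holomorphic_on ball 0 1" "\<And>z. z \<in> ball 0 1 \<Longrightarrow> 0 < Re (g z)" "n \<ge> 1"
  shows "norm ((deriv ^^ n) g 0 / fact n) \<le> 2 * Re (g 0)"
proof -
  let ?a = "norm ((deriv ^^ n) g 0 / fact n)"
  have "((\<lambda>\<rho>. ?a * \<rho> ^ n) \<longlongrightarrow> ?a * 1 ^ n) (at_left (1::real))"
    by (intro tendsto_intros)
  moreover have "eventually (\<lambda>\<rho>. \<rho> \<in> {0<..<1}) (at_left (1::real))"
    by (rule eventually_at_left_real) simp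
  then have "eventually (\<lambda>\<rho>. ?a * \<rho> ^ n \<le> 2 * Re (g 0)) (at_left (1::real))"
    by eventually_elim (use Caratheodory_coeff_bound_circle[OF assms] in auto)
  ultimately show ?thesis
    using tendsto_upperbound by fastforce
qed

lemma admissible_coeff_bound:
  assumes "admissible a0 f" "n \<ge> 1"
  shows "norm (taylor_coeff f n) \<le> 2 * (1 - a0)"
proof -
  have holo: "f holomorphic_on ball 0 1"
    using assms(1) by (simp add: admissible_def)
  have "(deriv ^^ n) (\<lambda>w. 1 - f w) 0 = (deriv ^^ n) (\<lambda>w. 1) 0 - (deriv ^^ n) f 0"
    by (rule higher_deriv_diff) (auto intro: holo)
  then have "norm (taylor_coeff f n) = norm ((deriv ^^ n) (\<lambda>w. 1 - f w) 0 / fact n)"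
    using assms(2) by (simp add: taylor_coeff_def norm_divide)
  also have "\<dots> \<le> 2 * Re (1 - f 0)"
    using assms by (intro Caratheodory_coeff_bound holomorphic_intros) (auto simp: admissible_def)
  also have "Re (1 - f 0) = 1 - a0"
    using assms(1) by (simp add: admissible_def)
  finally show ?thesis .
qed

lemma geometric_sums_Suc:
  fixes c :: "'a :: real_normed_field"
  assumes "norm c < 1"
  shows "(\<lambda>n. c ^ Suc n) sums (c / (1 - c))"
  using sums_mult[OF geometric_sums[OF assms], of c] by simp

lemma suminf_le_of_nonneg:
  fixes f g :: "nat \<Rightarrow> real"
  assumes "\<And>n. 0 \<le> f n" "\<And>n. f n \<le> g n" "summable g"
  shows "suminf f \<le> suminf g"
proof (rule suminf_le)
  show "summable f"
    by (rule summable_comparison_test'[OF assms(3), of 0]) (use assms in auto)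
qed (use assms in auto)

lemma bohr_sum_le_of_norm_coeff_le:
  assumes le: "\<And>n. norm (taylor_coeff f n) \<le> norm (taylor_coeff g n)"
    and sum1: "summable (\<lambda>n. norm (taylor_coeff g n) * r ^ n)"
    and sum2: "summable (\<lambda>n. (norm (taylor_coeff g (Suc n)))\<^sup>2 * r ^ (2 * Suc n))"
    and "0 \<le> a0" "0 \<le> r" "r < 1"
  shows "bohr_sum f a0 r \<le> bohr_sum g a0 r"
proof -
  have "(\<Sum>n. norm (taylor_coeff f n) * r ^ n) \<le> (\<Sum>n. norm (taylor_coeff g n) * r ^ n)"
    using \<open>0 \<le> r\<close> by (intro suminf_le_of_nonneg sum1 mult_right_mono le) auto
  moreover have "(\<Sum>n. (norm (taylor_coeff f (Suc n)))\<^sup>2 * r ^ (2 * Suc n))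
      \<le> (\<Sum>n. (norm (taylor_coeff g (Suc n)))\<^sup>2 * r ^ (2 * Suc n))"
    using \<open>0 \<le> r\<close> by (intro suminf_le_of_nonneg sum2 mult_right_mono power_mono le) auto
  moreover have "0 \<le> 1 / (1 + a0) + r / (1 - r)"
    using assms by simp
  ultimately show ?thesis
    unfolding bohr_sum_def by (meson add_mono mult_left_mono)
qed

definition extremal :: "real \<Rightarrow> complex \<Rightarrow> complex" where
  "extremal a0 z = a0 - 2 * (1 - a0) * z / (1 - z)"

lemma extremal_has_fps_expansion:
  "extremal a0 has_fps_expansion fps_const (of_real a0) - fps_const (of_real (2 * (1 - a0))) * (fps_X * inverse (1 - fps_X))"
proof -
  have "extremal a0 = (\<lambda>z. of_real a0 - of_real (2 * (1 - a0)) * (z * inverse (1 - z)))"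
    by (simp add: fun_eq_iff extremal_def divide_inverse mult_ac)
  then show ?thesis
    by simp (intro fps_expansion_intros, auto)
qed

lemma taylor_coeff_extremal:
  "taylor_coeff (extremal a0) n = (if n = 0 then of_real a0 else - of_real (2 * (1 - a0)))"
proof -
  have inv: "inverse (1 - fps_X :: complex fps) = Abs_fps (\<lambda>_. 1)"
    by (metis fps_inverse_gp' fps_inverse_idempotent fps_nth_Abs_fps one_neq_zero)
  have "taylor_coeff (extremal a0) n
      = fps_nth (fps_const (of_real a0) - fps_const (of_real (2 * (1 - a0))) * (fps_X * inverse (1 - fps_X))) n"
    unfolding taylor_coeff_def of_nat_fact by (rule fps_nth_fps_expansion[OF extremal_has_fps_expansion, symmetric])
  also have "\<dots> = (if n = 0 then of_real a0 else - of_real (2 * (1 - a0)))"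
    unfolding inv by simp
  finally show ?thesis .
qed

lemma Re_inverse_one_minus_gt_half:
  fixes z :: complex
  assumes "norm z < 1"
  shows "1 / 2 < Re (inverse (1 - z))"
proof -
  define w where "w = 1 - z"
  have "(norm (w - 1))\<^sup>2 < 1"
    using assms by (simp add: w_def norm_minus_commute abs_square_less_1)
  moreover have "(norm (w - 1))\<^sup>2 = (Re w)\<^sup>2 + (Im w)\<^sup>2 - 2 * Re w + 1"
    unfolding cmod_power2 by (simp add: power2_eq_square algebra_simps)
  ultimately have less: "(Re w)\<^sup>2 + (Im w)\<^sup>2 < 2 * Re w"
    by linarith
  then have "0 < Re w"
    by (smt (verit) zero_le_power2)
  then have "0 < (Re w)\<^sup>2 + (Im w)\<^sup>2"
    by (simp add: add_pos_nonneg)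
  moreover have "Re (inverse w) = Re w / ((Re w)\<^sup>2 + (Im w)\<^sup>2)"
    by (simp only: inverse_complex.simps)
  ultimately show ?thesis
    using less unfolding w_def[symmetric] by (simp add: less_divide_eq)
qed

lemma admissible_extremal:
  assumes "a0 < 1"
  shows "admissible a0 (extremal a0)"
  unfolding admissible_def
proof (intro conjI ballI)
  show "extremal a0 holomorphic_on ball 0 1"
    unfolding extremal_def[abs_def] by (intro holomorphic_intros) auto
  show "extremal a0 0 = of_real a0"
    by (simp add: extremal_def)
  fix z :: complex
  assume "z \<in> ball 0 1"
  then have "z \<noteq> 1"
    by auto
  then have "extremal a0 z = 1 - (1 - a0) * (2 * inverse (1 - z) - 1)"
    unfolding extremal_def by (simp add: field_simps)
  then have "Re (extremal a0 z) = 1 - (1 - a0) * (2 * Re (inverse (1 - z)) - 1)"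
    by simp
  moreover have "1 / 2 < Re (inverse (1 - z))"
    using \<open>z \<in> ball 0 1\<close> by (intro Re_inverse_one_minus_gt_half) simp
  with assms have "0 < (1 - a0) * (2 * Re (inverse (1 - z)) - 1)"
    by (intro mult_pos_pos) linarith+
  ultimately show "Re (extremal a0 z) < 1"
    by linarith
qed

lemma norm_taylor_coeff_extremal:
  assumes "0 \<le> a0" "a0 \<le> 1"
  shows "norm (taylor_coeff (extremal a0) n) = (if n = 0 then a0 else 2 * (1 - a0))"
proof -
  have "norm (- complex_of_real (2 * (1 - a0))) = 2 * (1 - a0)"
    using assms by (simp only: norm_minus_cancel norm_of_real) simp
  with assms show ?thesis
    by (simp add: taylor_coeff_extremal)
qed

lemma extremal_sums:
  assumes a0: "0 \<le> a0" "a0 \<le> 1" and r: "0 \<le> r" "r < 1"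
  shows "(\<lambda>n. norm (taylor_coeff (extremal a0) n) * r ^ n) sums (a0 + 2 * (1 - a0) * (r / (1 - r)))"
    and "(\<lambda>n. (norm (taylor_coeff (extremal a0) (Suc n)))\<^sup>2 * r ^ (2 * Suc n))
           sums (4 * (1 - a0)\<^sup>2 * (r\<^sup>2 / (1 - r\<^sup>2)))"
proof -
  have "(\<lambda>n. 2 * (1 - a0) * r ^ Suc n) sums (2 * (1 - a0) * (r / (1 - r)))"
    using r by (intro sums_mult geometric_sums_Suc) simp
  then have "(\<lambda>n. norm (taylor_coeff (extremal a0) (Suc n)) * r ^ Suc n) sums (2 * (1 - a0) * (r / (1 - r)))"
    using a0 by (simp add: norm_taylor_coeff_extremal)
  from sums_Suc[OF this]
  show "(\<lambda>n. norm (taylor_coeff (extremal a0) n) * r ^ n) sums (a0 + 2 * (1 - a0) * (r / (1 - r)))"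
    using a0 by (simp add: norm_taylor_coeff_extremal add.commute)
  have "(\<lambda>n. 4 * (1 - a0)\<^sup>2 * (r\<^sup>2) ^ Suc n) sums (4 * (1 - a0)\<^sup>2 * (r\<^sup>2 / (1 - r\<^sup>2)))"
    using r by (intro sums_mult geometric_sums_Suc) (simp add: abs_square_less_1)
  moreover have "(norm (taylor_coeff (extremal a0) (Suc n)))\<^sup>2 * r ^ (2 * Suc n)
      = 4 * (1 - a0)\<^sup>2 * (r\<^sup>2) ^ Suc n" for n
    by (simp only: norm_taylor_coeff_extremal[OF a0] Suc_neq_Zero if_False power_mult)
       (simp add: power2_eq_square algebra_simps)
  ultimately show "(\<lambda>n. (norm (taylor_coeff (extremal a0) (Suc n)))\<^sup>2 * r ^ (2 * Suc n))
           sums (4 * (1 - a0)\<^sup>2 * (r\<^sup>2 / (1 - r\<^sup>2)))"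
    by simp
qed

definition bohr_majorant :: "real \<Rightarrow> real \<Rightarrow> real" where
  "bohr_majorant a0 r = a0 + 2 * (1 - a0) * (r / (1 - r)) +
     (1 / (1 + a0) + r / (1 - r)) * (4 * (1 - a0)\<^sup>2 * (r\<^sup>2 / (1 - r\<^sup>2)))"

lemma bohr_sum_extremal:
  assumes "0 \<le> a0" "a0 \<le> 1" "0 \<le> r" "r < 1"
  shows "bohr_sum (extremal a0) a0 r = bohr_majorant a0 r"
  using extremal_sums[OF assms] by (simp add: bohr_sum_def bohr_majorant_def sums_iff)

lemma bohr_sum_le_majorant:
  assumes "admissible a0 f" "0 \<le> a0" "a0 \<le> 1" "0 \<le> r" "r < 1"
  shows "bohr_sum f a0 r \<le> bohr_majorant a0 r"
proof -
  have "norm (taylor_coeff f n) \<le> norm (taylor_coeff (extremal a0) n)" for n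
  proof (cases "n = 0")
    case True
    have "taylor_coeff f 0 = of_real a0"
      using assms(1) by (simp add: taylor_coeff_def admissible_def)
    with True show ?thesis
      using assms by (simp add: norm_taylor_coeff_extremal)
  next
    case False
    then show ?thesis
      using assms admissible_coeff_bound[OF assms(1), of n] by (simp add: norm_taylor_coeff_extremal)
  qed
  then have "bohr_sum f a0 r \<le> bohr_sum (extremal a0) a0 r"
    using extremal_sums[OF assms(2-5)] assms by (intro bohr_sum_le_of_norm_coeff_le) (auto simp: sums_iff)
  then show ?thesis
    using bohr_sum_extremal[OF assms(2-5)] by simp
qed

lemma one_minus_bohr_majorant:
  assumes "0 \<le> a0" "0 \<le> r" "r < 1"
  shows "1 - bohr_majorant a0 r = (1 - a0) * Phi (1 - a0) r / ((1 + a0) * (1 - r) * (1 - r\<^sup>2))"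
proof -
  have "r\<^sup>2 < 1"
    using assms by (simp add: abs_square_less_1)
  then have "1 + a0 \<noteq> 0" "1 - r \<noteq> 0" "1 - r\<^sup>2 \<noteq> 0"
    using assms by auto
  then show ?thesis
    unfolding bohr_majorant_def Phi_def
    by (simp add: divide_simps) (simp add: algebra_simps power2_eq_square power3_eq_cube)
qed

lemma bohr_majorant_strict_mono:
  assumes "0 \<le> a0" "a0 < 1" "0 \<le> r" "r < s" "s < 1"
  shows "bohr_majorant a0 r < bohr_majorant a0 s"
proof -
  have frac: "x / (1 - x) < y / (1 - y)" if "0 \<le> x" "x < y" "y < 1" for x y :: real
    using that by (simp add: field_simps)
  have "r\<^sup>2 < s\<^sup>2" "s\<^sup>2 < 1"
    using assms by (simp_all add: power_strict_mono abs_square_less_1)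
  then have "r\<^sup>2 / (1 - r\<^sup>2) < s\<^sup>2 / (1 - s\<^sup>2)"
    by (intro frac) auto
  moreover have "r / (1 - r) < s / (1 - s)"
    using assms by (intro frac)
  moreover have "0 \<le> r / (1 - r)" "0 \<le> r\<^sup>2 / (1 - r\<^sup>2)"
    using assms \<open>r\<^sup>2 < s\<^sup>2\<close> \<open>s\<^sup>2 < 1\<close> by auto
  moreover have "0 < 1 / (1 + a0)" "0 < 1 - a0"
    using assms by simp_all
  ultimately have "2 * (1 - a0) * (r / (1 - r)) < 2 * (1 - a0) * (s / (1 - s))"
    and "(1 / (1 + a0) + r / (1 - r)) * (4 * (1 - a0)\<^sup>2 * (r\<^sup>2 / (1 - r\<^sup>2)))
      \<le> (1 / (1 + a0) + s / (1 - s)) * (4 * (1 - a0)\<^sup>2 * (s\<^sup>2 / (1 - s\<^sup>2)))"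
    by (intro mult_strict_left_mono mult_mono mult_left_mono add_left_mono mult_nonneg_nonneg;
        simp)+
  then show ?thesis
    unfolding bohr_majorant_def by linarith
qed

lemma rstar_poly_strict_antimono:
  fixes x y :: real
  assumes "0 < x" "x < y" "y < 1"
  shows "rstar_poly y < rstar_poly x"
proof -
  have "rstar_poly x - rstar_poly y = (y - x) * (5 * (x + y) + 3 - 3 * (x\<^sup>2 + x * y + y\<^sup>2))"
    unfolding rstar_poly_def by (simp add: algebra_simps power2_eq_square power3_eq_cube)
  moreover have "x\<^sup>2 < x" "y\<^sup>2 < y" "x * y < y"
    using assms by (simp_all add: power2_eq_square mult_less_cancel_right1)
  ultimately show ?thesis
    using assms by (smt (verit) mult_pos_pos)
qed

lemma rstar_poly_ex1_root: "\<exists>!r. 0 < r \<and> r < 1 \<and> rstar_poly r = 0"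
  and rstar_bounds: "0 < rstar" "rstar < 1/3" "rstar_poly rstar = 0"
proof -
  have "continuous_on {0..1/3} rstar_poly"
    unfolding rstar_poly_def by (intro continuous_intros)
  moreover have "0 < rstar_poly 0" "rstar_poly (1/3) < 0"
    by (simp_all add: rstar_poly_def power2_eq_square power3_eq_cube)
  ultimately obtain x where "x \<in> {0..1/3}" "rstar_poly x = 0"
    using IVT2'[of rstar_poly "1/3" 0 0] by auto
  moreover have "x \<noteq> 0" "x \<noteq> 1/3"
    using \<open>rstar_poly x = 0\<close> \<open>0 < rstar_poly 0\<close> \<open>rstar_poly (1/3) < 0\<close>
    by (metis less_irrefl)+
  ultimately have x: "0 < x" "x < 1/3" "rstar_poly x = 0"
    by auto
  have unique: "r = x" if "0 < r" "r < 1" "rstar_poly r = 0" for r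
    using that x rstar_poly_strict_antimono[of r x] rstar_poly_strict_antimono[of x r]
    by (cases r x rule: linorder_cases) auto
  show "\<exists>!r. 0 < r \<and> r < 1 \<and> rstar_poly r = 0"
    by (rule ex1I[of _ x]) (use x in simp, use unique in blast)
  have "rstar = x"
    unfolding rstar_def by (rule the_equality) (use x in simp, use unique in blast)
  with x show "0 < rstar" "rstar < 1/3" "rstar_poly rstar = 0"
    by auto
qed

lemma Phi_eq_rstar_poly:
  "Phi lam r = rstar_poly r + (1 - lam) * (1 - r) ^ 3 + 4 * r ^ 3 * (1 - lam)\<^sup>2"
  unfolding Phi_def rstar_poly_def by (simp add: algebra_simps power2_eq_square power3_eq_cube)

lemma Phi_rstar_pos:
  assumes "lam < 1"
  shows "Phi lam rstar > 0"
  using assms rstar_bounds by (simp add: Phi_eq_rstar_poly add_pos_nonneg)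

lemma Phi_one_third_neg:
  assumes "0 < lam" "lam < 1"
  shows "Phi lam (1/3) < 0"
proof -
  have "Phi lam (1/3) = 4 * lam * (lam - 4) / 27"
    unfolding Phi_def by (simp add: algebra_simps power2_eq_square power3_eq_cube)
  moreover have "lam * (lam - 4) < 0"
    using assms by (simp add: mult_pos_neg)
  ultimately show ?thesis
    by simp
qed

lemma bohr_majorant_eq_1_iff:
  assumes "0 \<le> a0" "a0 < 1" "0 \<le> r" "r < 1"
  shows "bohr_majorant a0 r = 1 \<longleftrightarrow> Phi (1 - a0) r = 0"
proof -
  have "r\<^sup>2 < 1"
    using assms by (simp add: abs_square_less_1)
  with assms show ?thesis
    using one_minus_bohr_majorant[of a0 r] by auto
qed

lemma Phi_ex1_root:
  assumes "0 < a0" "a0 < 1"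
  shows "\<exists>!r0. rstar < r0 \<and> r0 < 1/3 \<and> Phi (1 - a0) r0 = 0"
proof -
  have "continuous_on {rstar..1/3} (Phi (1 - a0))"
    unfolding Phi_def by (intro continuous_intros)
  moreover have "Phi (1 - a0) (1/3) < 0" "0 < Phi (1 - a0) rstar"
    using assms by (simp_all add: Phi_one_third_neg Phi_rstar_pos)
  ultimately obtain x where "x \<in> {rstar..1/3}" "Phi (1 - a0) x = 0"
    using IVT2'[of "Phi (1 - a0)" "1/3" 0 rstar] rstar_bounds by fastforce
  moreover have "x \<noteq> rstar" "x \<noteq> 1/3"
    using \<open>Phi (1 - a0) x = 0\<close> \<open>Phi (1 - a0) (1/3) < 0\<close> \<open>0 < Phi (1 - a0) rstar\<close>
    by (metis less_irrefl)+
  ultimately have x: "rstar < x" "x < 1/3" "Phi (1 - a0) x = 0"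
    by auto
  have unique: "r = x" if "rstar < r" "r < 1/3" "Phi (1 - a0) r = 0" for r
  proof -
    have "bohr_majorant a0 r = 1" "bohr_majorant a0 x = 1"
      using that x assms rstar_bounds by (simp_all add: bohr_majorant_eq_1_iff)
    then show "r = x"
      using that x assms rstar_bounds bohr_majorant_strict_mono[of a0 r x] bohr_majorant_strict_mono[of a0 x r]
      by (cases r x rule: linorder_cases) auto
  qed
  show ?thesis
    by (rule ex1I[of _ x]) (use x in simp, use unique in blast)
qed

lemma bohr_sum_le_1:
  assumes "admissible a0 f" "0 \<le> a0" "a0 < 1"
    and "Phi (1 - a0) r0 = 0" "0 \<le> r" "r \<le> r0" "r0 < 1"
  shows "bohr_sum f a0 r \<le> 1"
proof -
  have "bohr_sum f a0 r \<le> bohr_majorant a0 r"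
    using assms by (intro bohr_sum_le_majorant) auto
  also have "\<dots> \<le> bohr_majorant a0 r0"
    using assms bohr_majorant_strict_mono[of a0 r r0] by (cases "r = r0") auto
  also have "\<dots> = 1"
    using assms bohr_majorant_eq_1_iff[of a0 r0] by auto
  finally show ?thesis .
qed

lemma bohr_sum_extremal_gt_1:
  assumes "0 \<le> a0" "a0 < 1" "Phi (1 - a0) r0 = 0" "0 \<le> r0" "r0 < r" "r < 1"
  shows "1 < bohr_sum (extremal a0) a0 r"
proof -
  have "1 = bohr_majorant a0 r0"
    using assms bohr_majorant_eq_1_iff[of a0 r0] by auto
  also have "\<dots> < bohr_majorant a0 r"
    using assms by (intro bohr_majorant_strict_mono) auto
  also have "\<dots> = bohr_sum (extremal a0) a0 r"
    using assms by (intro bohr_sum_extremal[symmetric]) auto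
  finally show ?thesis .
qed

theorem theorem1:
  shows "(\<exists>!r. 0 < r \<and> r < 1 \<and> rstar_poly r = 0)
    \<and> (\<forall>a0 f r. 0 < a0 \<and> a0 < 1 \<and> admissible a0 f \<and> 0 \<le> r \<and> r \<le> rstar
          \<longrightarrow> bohr_sum f a0 r \<le> 1)
    \<and> (\<forall>a0. 0 < a0 \<and> a0 < 1 \<longrightarrow>
          (\<exists>!r0. rstar < r0 \<and> r0 < 1/3 \<and> Phi (1 - a0) r0 = 0)
        \<and> (\<forall>r0. rstar < r0 \<and> r0 < 1/3 \<and> Phi (1 - a0) r0 = 0 \<longrightarrow>
              (\<forall>f r. admissible a0 f \<and> 0 \<le> r \<and> r \<le> r0 \<longrightarrow> bohr_sum f a0 r \<le> 1)
            \<and> (\<forall>r. r0 < r \<and> r < 1 \<longrightarrow> (\<exists>f. admissible a0 f \<and> bohr_sum f a0 r > 1))))"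
proof (intro conjI allI impI)
  show "\<exists>!r. 0 < r \<and> r < 1 \<and> rstar_poly r = 0"
    by (rule rstar_poly_ex1_root)
next
  fix a0 f r
  assume "0 < a0 \<and> a0 < 1 \<and> admissible a0 f \<and> 0 \<le> r \<and> r \<le> rstar"
  moreover from this obtain r0 where "rstar < r0" "r0 < 1/3" "Phi (1 - a0) r0 = 0"
    using Phi_ex1_root by blast
  ultimately show "bohr_sum f a0 r \<le> 1"
    by (intro bohr_sum_le_1[of a0 f r0]) auto
next
  fix a0 :: real
  assume a0: "0 < a0 \<and> a0 < 1"
  then show "\<exists>!r0. rstar < r0 \<and> r0 < 1/3 \<and> Phi (1 - a0) r0 = 0"
    by (intro Phi_ex1_root) auto
  fix r0
  assume r0: "rstar < r0 \<and> r0 < 1/3 \<and> Phi (1 - a0) r0 = 0"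
  show "bohr_sum f a0 r \<le> 1" if "admissible a0 f \<and> 0 \<le> r \<and> r \<le> r0" for f r
    using that a0 r0 by (intro bohr_sum_le_1) auto
  show "\<exists>f. admissible a0 f \<and> bohr_sum f a0 r > 1" if "r0 < r \<and> r < 1" for r
    using that a0 r0 rstar_bounds
    by (intro exI[of _ "extremal a0"] conjI admissible_extremal bohr_sum_extremal_gt_1) auto
qed

end
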